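(* Let $n\ge1$ and let $L$ be a simplicial complex on the ground set $[k]$. Then the matching $\mathcal{M}_L$ on the directed graph $G_L$ is acyclic, i.e. the directed graph obtained from $G_L$ by reversing the direction of every edge in $\mathcal{M}_L$ contains no directed cycle.
   Context: Give $D^n$ the regular CW structure with cells $e_-^i,e_+^i$ for $0\le i\le n-1$ (for each $i$, $e_\pm^i$ are the two open hemispheres of $S^i\subseteq S^{n-1}$, so the closure of $e_\pm^{i}$ is $e_\pm^i\cup\bigcup_{j<i}(e_-^j\cup e_+^j)$) together with the top cell $e_\bullet^n$ whose boundary is $S^{n-1}$. Give $(D^n)^k$ the product cell structure, with cells $c=c_1\times\dots\times c_k$. A simplicial complex $L$ on $[k]$ is a family of subsets of $[k]$ closed under taking subsets. For a cell $c$ let $\mathrm{supp}(c)=\{i: c_i=e_\bullet^n\}$; the polyhedral product $\mathcal{Z}_L(D^n,S^{n-1})$ is the subcomplex of $(D^n)^k$ consisting of the cells $c$ with $\mathrm{supp}(c)\in L$. $G_L$ is the directed graph whose vertices are these cells, with an edge $c\to c'$ whenever $c'$ lies in the closure of $c$ and $\dim c'=\dim c-1$. Let $\mathcal{M}$ be the set of edges $e_-^{i+1}\to e_+^i$ ($0\le i\le n-2$) and $e_\bullet^n\to e_+^{n-1}$ of the analogous graph for $D^n$. Define $\mathcal{M}_1=\{c\to c'\in G_L : c_1\to c'_1\in\mathcal{M}\}$ and, for $1\le j\le k-1$, $\mathcal{M}_{j+1}=\{c\to c'\in G_L: $ neither $c$ nor $c'$ belongs to an edge of $\mathcal{M}_1\cup\dots\cup\mathcal{M}_j$,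 and $c_{j+1}\to c'_{j+1}\in\mathcal{M}\}$. Set $\mathcal{M}_L=\bigcup_{j=1}^k\mathcal{M}_j$; this is a matching (each cell lies in at most one edge of $\mathcal{M}_L$). *)

theory Defs
  imports Main
begin

text \<open>Cells of the regular CW structure on D^n:
  Em i = e_-^i, Ep i = e_+^i (0 <= i <= n-1), Eb = e_bullet^n (top cell).\<close>
datatype dcell = Em nat | Ep nat | Eb

fun dcell_valid :: "nat \<Rightarrow> dcell \<Rightarrow> bool" where
  "dcell_valid n (Em i) = (i < n)"
| "dcell_valid n (Ep i) = (i < n)"
| "dcell_valid n Eb = True"

fun dcell_dim :: "nat \<Rightarrow> dcell \<Rightarrow> nat" where
  "dcell_dim n (Em i) = i"
| "dcell_dim n (Ep i) = i"
| "dcell_dim n Eb = n"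

fun dcell_closure :: "nat \<Rightarrow> dcell \<Rightarrow> dcell set" where
  "dcell_closure n (Em i) = {Em i} \<union> {Em j | j. j < i} \<union> {Ep j | j. j < i}"
| "dcell_closure n (Ep i) = {Ep i} \<union> {Em j | j. j < i} \<union> {Ep j | j. j < i}"
| "dcell_closure n Eb = {c. dcell_valid n c}"

definition Mdisk :: "nat \<Rightarrow> (dcell \<times> dcell) set" where
  "Mdisk n = {(Em (i+1), Ep i) | i. i + 2 \<le> n} \<union> {(Eb, Ep (n - 1))}"

text \<open>Cells of (D^n)^k are lists c of length k; coordinate c_i (i in [k]) is c ! (i-1).\<close>
definition supp :: "dcell list \<Rightarrow> nat set" where
  "supp c = {i. 1 \<le> i \<and> i \<le> length c \<and> c ! (i - 1) = Eb}"

definition simplicial_complex :: "nat \<Rightarrow> nat set set \<Rightarrow> bool" where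
  "simplicial_complex k L \<longleftrightarrow> (\<forall>\<sigma>\<in>L. \<sigma> \<subseteq> {1..k}) \<and> (\<forall>\<sigma>\<in>L. \<forall>\<tau>. \<tau> \<subseteq> \<sigma> \<longrightarrow> \<tau> \<in> L)"

definition cell_dim :: "nat \<Rightarrow> dcell list \<Rightarrow> nat" where
  "cell_dim n c = sum_list (map (dcell_dim n) c)"

definition ZL_cells :: "nat \<Rightarrow> nat \<Rightarrow> nat set set \<Rightarrow> dcell list set" where
  "ZL_cells n k L = {c. length c = k \<and> (\<forall>x\<in>set c. dcell_valid n x) \<and> supp c \<in> L}"

text \<open>Closure of a product cell is the product of closures.\<close>
definition in_closure :: "nat \<Rightarrow> dcell list \<Rightarrow> dcell list \<Rightarrow> bool" where
  "in_closure n c' c \<longleftrightarrow> list_all2 (\<lambda>a b. a \<in> dcell_closure n b) c' c"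

definition GL_edges :: "nat \<Rightarrow> nat \<Rightarrow> nat set set \<Rightarrow> (dcell list \<times> dcell list) set" where
  "GL_edges n k L = {(c, c'). c \<in> ZL_cells n k L \<and> c' \<in> ZL_cells n k L \<and>
      in_closure n c' c \<and> cell_dim n c' + 1 = cell_dim n c}"

definition in_some_edge :: "'a \<Rightarrow> ('a \<times> 'a) set \<Rightarrow> bool" where
  "in_some_edge x E \<longleftrightarrow> (\<exists>(a, b)\<in>E. x = a \<or> x = b)"

text \<open>Mupto n k L j = M_1 \<union> ... \<union> M_j. The step adds M_{j+1}, which uses coordinate j+1,
  i.e. list position j. (For j = 0 the non-membership condition is vacuous, giving M_1.)\<close>
fun Mupto :: "nat \<Rightarrow> nat \<Rightarrow> nat set set \<Rightarrow> nat \<Rightarrow> (dcell list \<times> dcell list) set" where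
  "Mupto n k L 0 = {}"
| "Mupto n k L (Suc j) = Mupto n k L j \<union>
     {(c, c') \<in> GL_edges n k L. \<not> in_some_edge c (Mupto n k L j) \<and>
        \<not> in_some_edge c' (Mupto n k L j) \<and> (c ! j, c' ! j) \<in> Mdisk n}"

definition MatchL :: "nat \<Rightarrow> nat \<Rightarrow> nat set set \<Rightarrow> (dcell list \<times> dcell list) set" where
  "MatchL n k L = Mupto n k L k"

definition GL_reversed :: "nat \<Rightarrow> nat \<Rightarrow> nat set set \<Rightarrow> (dcell list \<times> dcell list) set" where
  "GL_reversed n k L = (GL_edges n k L - MatchL n k L) \<union> (MatchL n k L)\<inverse>"

end

theory Submission
  imports Defs
begin

text \<open>The height \<open>2 dim c\<close>, lowered by one on sources and raised by one on targets of
  \<open>M_L\<close>, does not increase along the reversed graph and stays constant only along reversed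
  matched edges and along unmatched edges from a source to a non-source. So a cycle lies in one
  height level, all of its cells are matched, and it spans a strongly connected set \<open>C\<close> of
  cells. Let \<open>M_(j+1)\<close> be the first stage matching a cell of \<open>C\<close>. The cells of \<open>D^n\<close> carry a
  weight that increases along the edges of \<open>\<M>\<close> and decreases along all other proper faces;
  read in coordinate \<open>j+1\<close> it does not increase along the edges inside \<open>C\<close>, because no cell
  of \<open>C\<close> is matched before stage \<open>j+1\<close>, yet it decreases strictly along the reversed stage
  \<open>j+1\<close> edge that some cell of \<open>C\<close> must use, and that edge lies on a cycle inside \<open>C\<close>.\<close>

lemma acyclic_if_level_acyclic:
  fixes f :: "'a \<Rightarrow> 'b::order"
  assumes mono: "\<And>a b. (a, b) \<in> R \<Longrightarrow> f b \<le> f a"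
    and "acyclic {(a, b) \<in> R. f b = f a}"
  shows "acyclic R"
proof -
  let ?level = "{(a, b) \<in> R. f b = f a}"
  have "f b \<le> f a \<and> (f b = f a \<longrightarrow> (a, b) \<in> ?level\<^sup>+)" if "(a, b) \<in> R\<^sup>+" for a b
    using that
  proof (induction rule: trancl_induct)
    case (base b)
    then show ?case using mono by auto
  next
    case (step y z)
    then have "f z \<le> f y" "f y \<le> f a" using mono by auto
    then show ?case using step by (auto intro: trancl_into_trancl dest: antisym)
  qed
  then show ?thesis using assms(2) by (auto simp: acyclic_def)
qed

lemma cycle_strongly_connected_set:
  assumes "(x, x) \<in> R\<^sup>+"
  obtains C where "x \<in> C" and "\<And>a b. a \<in> C \<Longrightarrow> b \<in> C \<Longrightarrow> (a, b) \<in> (Restr R C)\<^sup>*"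
    and "\<And>a. a \<in> C \<Longrightarrow> \<exists>b. (a, b) \<in> Restr R C"
    and "\<And>a. a \<in> C \<Longrightarrow> \<exists>b. (b, a) \<in> Restr R C"
proof
  let ?C = "{y. (x, y) \<in> R\<^sup>* \<and> (y, x) \<in> R\<^sup>*}"
  show "x \<in> ?C" by simp
  have path: "(a, b) \<in> (Restr R ?C)\<^sup>*" if "(a, b) \<in> R\<^sup>*" "a \<in> ?C" "(b, x) \<in> R\<^sup>*" for a b
    using that
  proof (induction rule: rtrancl_induct)
    case (step y b)
    then have "y \<in> ?C" "b \<in> ?C" by (auto intro: rtrancl_trans converse_rtrancl_into_rtrancl)
    then show ?case using step by (auto intro: rtrancl_into_rtrancl)
  qed simp
  show "(a, b) \<in> (Restr R ?C)\<^sup>*" if "a \<in> ?C" "b \<in> ?C" for a b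
    using path[of a b] that by (auto intro: rtrancl_trans)
  have loop: "(a, a) \<in> R\<^sup>+" if "a \<in> ?C" for a
    using that rtrancl_trancl_trancl[OF _ trancl_rtrancl_trancl[OF assms]] by blast
  show "\<exists>b. (a, b) \<in> Restr R ?C" if a: "a \<in> ?C" for a
  proof -
    obtain b where "(a, b) \<in> R" "(b, a) \<in> R\<^sup>*" using tranclD[OF loop[OF a]] by blast
    then show ?thesis using a by (auto intro: rtrancl_trans rtrancl_into_rtrancl)
  qed
  show "\<exists>b. (b, a) \<in> Restr R ?C" if a: "a \<in> ?C" for a
  proof -
    obtain b where "(a, b) \<in> R\<^sup>*" "(b, a) \<in> R" using tranclD2[OF loop[OF a]] by blast
    then show ?thesis using a by (auto intro: rtrancl_trans converse_rtrancl_into_rtrancl)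
  qed
qed

text \<open>\<open>Mstage n k L j\<close> is \<open>M_(j+1)\<close>; it matches in list position \<open>j\<close>.\<close>
definition Mstage :: "nat \<Rightarrow> nat \<Rightarrow> nat set set \<Rightarrow> nat \<Rightarrow> (dcell list \<times> dcell list) set" where
  "Mstage n k L j = {(c, c') \<in> GL_edges n k L. \<not> in_some_edge c (Mupto n k L j) \<and>
      \<not> in_some_edge c' (Mupto n k L j) \<and> (c ! j, c' ! j) \<in> Mdisk n}"

lemma Mupto_Suc_Mstage: "Mupto n k L (Suc j) = Mupto n k L j \<union> Mstage n k L j"
  by (simp add: Mstage_def)

declare Mupto.simps(2)[simp del]

lemma Mupto_mono: "i \<le> j \<Longrightarrow> Mupto n k L i \<subseteq> Mupto n k L j"
  by (induction rule: dec_induct) (auto simp: Mupto_Suc_Mstage)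

lemma Mstage_subset_Mupto: "t < m \<Longrightarrow> Mstage n k L t \<subseteq> Mupto n k L m"
  using Mupto_mono[of "Suc t" m n k L] by (auto simp: Mupto_Suc_Mstage)

lemma Mupto_imp_Mstage: "e \<in> Mupto n k L m \<Longrightarrow> \<exists>t<m. e \<in> Mstage n k L t"
  by (induction m) (auto simp: Mupto_Suc_Mstage less_Suc_eq)

lemma MatchL_subset_GL_edges: "MatchL n k L \<subseteq> GL_edges n k L"
  using Mupto_imp_Mstage by (fastforce simp: MatchL_def Mstage_def)

lemma in_some_edge_iff: "in_some_edge x E \<longleftrightarrow> (\<exists>y. (x, y) \<in> E \<or> (y, x) \<in> E)"
  unfolding in_some_edge_def by auto

lemma Mupto_source_not_target:
  assumes "(x, y) \<in> Mupto n k L m" and "(u, x) \<in> Mupto n k L m'"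
  shows False
proof -
  obtain s where s: "(x, y) \<in> Mstage n k L s" using Mupto_imp_Mstage[OF assms(1)] by blast
  obtain t where t: "(u, x) \<in> Mstage n k L t" using Mupto_imp_Mstage[OF assms(2)] by blast
  consider "s = t" | "s < t" | "t < s" by arith
  then show False
  proof cases
    case 1
    then show ?thesis using s t by (auto simp: Mstage_def Mdisk_def)
  next
    case 2
    then have "(x, y) \<in> Mupto n k L t" using Mstage_subset_Mupto s by blast
    then show ?thesis using t by (auto simp: Mstage_def in_some_edge_iff)
  next
    case 3
    then have "(u, x) \<in> Mupto n k L s" using Mstage_subset_Mupto t by blast
    then show ?thesis using s by (auto simp: Mstage_def in_some_edge_iff)
  qed
qed

lemma Mupto_edge_in_first_Mstage:
  assumes "(a, b) \<in> Mupto n k L m" and "z = a \<or> z = b"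
    and "\<not> in_some_edge z (Mupto n k L j)" and "in_some_edge z (Mupto n k L (Suc j))"
  shows "(a, b) \<in> Mstage n k L j"
proof -
  obtain t where t: "(a, b) \<in> Mstage n k L t" using Mupto_imp_Mstage[OF assms(1)] by blast
  consider "t = j" | "t < j" | "j < t" by arith
  then show ?thesis
  proof cases
    case 1
    then show ?thesis using t by simp
  next
    case 2
    then have "(a, b) \<in> Mupto n k L j" using Mstage_subset_Mupto t by blast
    then show ?thesis using assms(2,3) by (auto simp: in_some_edge_iff)
  next
    case 3
    then have "in_some_edge z (Mupto n k L t)"
      using assms(4) Mupto_mono[of "Suc j" t n k L] by (auto simp: in_some_edge_iff)
    then show ?thesis using t assms(2) by (auto simp: Mstage_def)
  qed
qed

lemma dcell_closure_dim:
  "dcell_valid n a \<Longrightarrow> a' \<in> dcell_closure n a \<Longrightarrow>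
    dcell_dim n a' \<le> dcell_dim n a \<and> (dcell_dim n a' = dcell_dim n a \<longrightarrow> a' = a)"
  by (cases a; cases a') auto

lemma Mdisk_dim: "(a, b) \<in> Mdisk n \<Longrightarrow> n \<ge> 1 \<Longrightarrow> dcell_dim n b + 1 = dcell_dim n a"
  by (auto simp: Mdisk_def)

fun dcell_weight :: "nat \<Rightarrow> dcell \<Rightarrow> nat" where
  "dcell_weight n (Em i) = 2 * i - 1"
| "dcell_weight n (Ep i) = 2 * i + 2"
| "dcell_weight n Eb = 2 * n - 1"

lemma dcell_weight_Mdisk: "(a, b) \<in> Mdisk n \<Longrightarrow> n \<ge> 1 \<Longrightarrow> dcell_weight n a < dcell_weight n b"
  by (auto simp: Mdisk_def)

lemma dcell_weight_closure:
  "dcell_valid n a \<Longrightarrow> a' \<in> dcell_closure n a \<Longrightarrow> a' \<noteq> a \<Longrightarrow> (a, a') \<notin> Mdisk n \<Longrightarrow> n \<ge> 1 \<Longrightarrow>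
    dcell_weight n a' < dcell_weight n a"
  by (cases a; cases a') (auto simp: Mdisk_def)

lemma cell_dim_conv_sum: "cell_dim n c = (\<Sum>p<length c. dcell_dim n (c ! p))"
  unfolding cell_dim_def by (simp add: sum_list_sum_nth atLeast0LessThan)

text \<open>No coordinate gains dimension and the total drops by one, all of it at \<open>t\<close>.\<close>
lemma GL_edge_other_coords:
  assumes e: "(d, c) \<in> GL_edges n k L" and drop: "dcell_dim n (c ! t) + 1 = dcell_dim n (d ! t)"
    and "t < k" and i: "i < k" "i \<noteq> t"
  shows "d ! i = c ! i"
proof (rule ccontr)
  assume ne: "d ! i \<noteq> c ! i"
  from e have len: "length d = k" "length c = k" and valid: "\<forall>x\<in>set d. dcell_valid n x"
    and cl: "list_all2 (\<lambda>a b. a \<in> dcell_closure n b) c d" and dim: "cell_dim n c + 1 = cell_dim n d"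
    by (auto simp: GL_edges_def ZL_cells_def in_closure_def)
  have coord: "dcell_dim n (c ! p) \<le> dcell_dim n (d ! p) \<and>
      (dcell_dim n (c ! p) = dcell_dim n (d ! p) \<longrightarrow> c ! p = d ! p)" if "p < k" for p
    using dcell_closure_dim[of n "d ! p" "c ! p"] list_all2_nthD[OF cl] valid that len by auto
  define f where "f p = dcell_dim n (c ! p) + (if p = t then 1 else 0)" for p
  have "sum f {..<k} < (\<Sum>p<k. dcell_dim n (d ! p))"
  proof (rule sum_strict_mono_ex1)
    show "\<forall>p\<in>{..<k}. f p \<le> dcell_dim n (d ! p)" using coord drop by (auto simp: f_def)
    show "\<exists>p\<in>{..<k}. f p < dcell_dim n (d ! p)" using coord[OF i(1)] ne i by (auto simp: f_def)
  qed simp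
  moreover have "sum f {..<k} = cell_dim n c + 1"
    using \<open>t < k\<close> len by (simp add: f_def sum.distrib cell_dim_conv_sum)
  ultimately show False using dim len by (simp add: cell_dim_conv_sum)
qed

lemma GL_reversed_cases:
  assumes "(c, c') \<in> GL_reversed n k L"
  obtains "(c, c') \<in> GL_edges n k L" "(c, c') \<notin> MatchL n k L"
    | "(c', c) \<in> MatchL n k L"
  using assms by (auto simp: GL_reversed_def)

lemma GL_reversed_weight_mono:
  assumes n: "n \<ge> 1" and e: "(c, c') \<in> GL_reversed n k L" and j: "j < k"
    and "\<not> in_some_edge c (Mupto n k L j)" and "\<not> in_some_edge c' (Mupto n k L j)"
  shows "dcell_weight n (c' ! j) \<le> dcell_weight n (c ! j)"
  using e
proof (cases rule: GL_reversed_cases)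
  case 1
  from 1(1) have len: "length c = k" "length c' = k" and valid: "\<forall>x\<in>set c. dcell_valid n x"
    and cl: "list_all2 (\<lambda>a b. a \<in> dcell_closure n b) c' c"
    by (auto simp: GL_edges_def ZL_cells_def in_closure_def)
  have "(c ! j, c' ! j) \<notin> Mdisk n"
  proof
    assume "(c ! j, c' ! j) \<in> Mdisk n"
    then have "(c, c') \<in> Mstage n k L j" using 1(1) assms(4,5) by (simp add: Mstage_def)
    then show False using 1(2) Mstage_subset_Mupto[OF j] by (auto simp: MatchL_def)
  qed
  then show ?thesis
    using dcell_weight_closure[OF _ _ _ _ n] list_all2_nthD[OF cl] valid j len
    by (cases "c' ! j = c ! j") (auto simp: less_imp_le)
next
  case 2
  then obtain t where t: "t < k" "(c', c) \<in> Mstage n k L t"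
    using Mupto_imp_Mstage unfolding MatchL_def by blast
  then have e': "(c', c) \<in> GL_edges n k L" and md: "(c' ! t, c ! t) \<in> Mdisk n"
    by (auto simp: Mstage_def)
  show ?thesis
  proof (cases "t = j")
    case True
    then show ?thesis using dcell_weight_Mdisk[OF md n] by simp
  next
    case False
    then show ?thesis using GL_edge_other_coords[OF e' Mdisk_dim[OF md n] t(1) j] by simp
  qed
qed

definition match_source :: "nat \<Rightarrow> nat \<Rightarrow> nat set set \<Rightarrow> dcell list \<Rightarrow> bool" where
  "match_source n k L x \<longleftrightarrow> (\<exists>y. (x, y) \<in> MatchL n k L)"

definition match_target :: "nat \<Rightarrow> nat \<Rightarrow> nat set set \<Rightarrow> dcell list \<Rightarrow> bool" where
  "match_target n k L x \<longleftrightarrow> (\<exists>y. (y, x) \<in> MatchL n k L)"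

definition cell_height :: "nat \<Rightarrow> nat \<Rightarrow> nat set set \<Rightarrow> dcell list \<Rightarrow> nat" where
  "cell_height n k L x = 2 * cell_dim n x +
    (if match_source n k L x then 0 else if match_target n k L x then 2 else 1)"

lemma GL_reversed_height:
  assumes "(c, c') \<in> GL_reversed n k L"
  shows "cell_height n k L c' \<le> cell_height n k L c \<and> (cell_height n k L c' = cell_height n k L c \<longrightarrow>
    (c', c) \<in> MatchL n k L \<or> (match_source n k L c \<and> \<not> match_source n k L c'))"
  using assms
proof (cases rule: GL_reversed_cases)
  case 1
  then have "cell_dim n c' + 1 = cell_dim n c" by (auto simp: GL_edges_def)
  then show ?thesis using 1 by (auto simp: cell_height_def)
next
  case 2
  then have "cell_dim n c + 1 = cell_dim n c'"
    using MatchL_subset_GL_edges by (auto simp: GL_edges_def)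
  moreover have "match_source n k L c'" "match_target n k L c"
    using 2 by (auto simp: match_source_def match_target_def)
  moreover have "\<not> match_source n k L c"
    using 2 Mupto_source_not_target by (auto simp: match_source_def MatchL_def)
  ultimately show ?thesis using 2 by (auto simp: cell_height_def)
qed

lemma first_matching_stage:
  assumes "x \<in> C" and matched: "\<And>a. a \<in> C \<Longrightarrow> in_some_edge a (MatchL n k L)"
  obtains j z where "j < k" and "\<And>y. y \<in> C \<Longrightarrow> \<not> in_some_edge y (Mupto n k L j)"
    and "z \<in> C" and "in_some_edge z (Mupto n k L (Suc j))"
proof -
  let ?P = "\<lambda>i. \<exists>y\<in>C. in_some_edge y (Mupto n k L i)"
  have "?P k" using assms by (auto simp: MatchL_def)
  moreover have "\<not> ?P 0" by (simp add: in_some_edge_iff)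
  ultimately obtain j where "j < k" "\<forall>i\<le>j. \<not> ?P i" "?P (Suc j)"
    using ex_least_nat_less[of ?P k] by blast
  then show ?thesis using that by auto
qed

lemma no_strongly_connected_level_set:
  assumes n: "n \<ge> 1" and "x \<in> C"
    and S: "S \<subseteq> GL_reversed n k L" "S \<subseteq> C \<times> C"
    and level: "\<And>a b. (a, b) \<in> S \<Longrightarrow>
      (b, a) \<in> MatchL n k L \<or> (match_source n k L a \<and> \<not> match_source n k L b)"
    and conn: "\<And>a b. a \<in> C \<Longrightarrow> b \<in> C \<Longrightarrow> (a, b) \<in> S\<^sup>*"
    and out: "\<And>a. a \<in> C \<Longrightarrow> \<exists>b. (a, b) \<in> S" and into: "\<And>a. a \<in> C \<Longrightarrow> \<exists>b. (b, a) \<in> S"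
  shows False
proof -
  have "in_some_edge a (MatchL n k L)" if "a \<in> C" for a
    using out[OF that] level by (force simp: in_some_edge_iff match_source_def)
  then obtain j z where j: "j < k" and unmatched: "\<And>y. y \<in> C \<Longrightarrow> \<not> in_some_edge y (Mupto n k L j)"
    and "z \<in> C" and z: "in_some_edge z (Mupto n k L (Suc j))"
    using first_matching_stage[OF \<open>x \<in> C\<close>] by metis
  have weight_mono: "dcell_weight n (b ! j) \<le> dcell_weight n (a ! j)" if "(a, b) \<in> S\<^sup>*" for a b
    using that
  proof (induction rule: rtrancl_induct)
    case (step y b)
    then show ?case using GL_reversed_weight_mono[OF n _ j unmatched unmatched] S by fastforce
  qed simp
  have first: "e \<in> Mstage n k L j" if "e \<in> MatchL n k L" "z = fst e \<or> z = snd e" for e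
    using Mupto_edge_in_first_Mstage[of "fst e" "snd e"] that unmatched[OF \<open>z \<in> C\<close>] z
    by (auto simp: MatchL_def)
  text \<open>The cycle enters \<open>z\<close> along its matched edge if \<open>z\<close> is a source, and leaves it along
    that edge otherwise.\<close>
  obtain a b where ab: "(a, b) \<in> S" "(b, a) \<in> Mstage n k L j"
  proof (cases "match_source n k L z")
    case True
    obtain a where "(a, z) \<in> S" using into[OF \<open>z \<in> C\<close>] by blast
    then show ?thesis using that level first True by fastforce
  next
    case False
    obtain b where "(z, b) \<in> S" using out[OF \<open>z \<in> C\<close>] by blast
    then show ?thesis using that level first False by fastforce
  qed
  then have "dcell_weight n (b ! j) < dcell_weight n (a ! j)"
    using dcell_weight_Mdisk[OF _ n] by (auto simp: Mstage_def)
  moreover have "dcell_weight n (a ! j) \<le> dcell_weight n (b ! j)"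
    using weight_mono conn ab(1) S(2) by blast
  ultimately show False by simp
qed

theorem proposition3p3:
  fixes n k :: nat and L :: "nat set set"
  assumes "n \<ge> 1" and "simplicial_complex k L"
  shows "acyclic (GL_reversed n k L)"
proof (rule acyclic_if_level_acyclic)
  let ?level = "{(a, b) \<in> GL_reversed n k L. cell_height n k L b = cell_height n k L a}"
  show "acyclic ?level"
  proof (unfold acyclic_def, intro allI notI)
    fix x assume "(x, x) \<in> ?level\<^sup>+"
    then obtain C where "x \<in> C" and C: "\<And>a b. a \<in> C \<Longrightarrow> b \<in> C \<Longrightarrow> (a, b) \<in> (Restr ?level C)\<^sup>*"
      "\<And>a. a \<in> C \<Longrightarrow> \<exists>b. (a, b) \<in> Restr ?level C" "\<And>a. a \<in> C \<Longrightarrow> \<exists>b. (b, a) \<in> Restr ?level C"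
      by (rule cycle_strongly_connected_set) blast
    show False
    proof (rule no_strongly_connected_level_set[OF assms(1) \<open>x \<in> C\<close>])
      show "(b, a) \<in> MatchL n k L \<or> (match_source n k L a \<and> \<not> match_source n k L b)"
        if "(a, b) \<in> Restr ?level C" for a b
        using that GL_reversed_height by auto
    qed (use C in auto)
  qed
qed (use GL_reversed_height in blast)

end
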